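(* Let $p\in\{2,3\}$; suppose $v_0\in L^2(\mathbb{R})$ if $p=2$ and $v_0\in H^1(\mathbb{R})$ if $p=3$, and let $\tilde v_1$ be the solution of $\partial_tu+\partial_x^3u+3\partial_x(u^p)=0$ with $\tilde v_1(0)=v_0$. Let $c_1>0$ and let $\varepsilon_0,\delta>0$ be constants such that for every $C^1$ function $\tilde x$ with $\inf_t\tilde x'(t)\ge c_1$, every $\varepsilon\in(0,\varepsilon_0)$ and every such $v_0$ with $\|v_0\|_{L^2}<\delta$, the estimate $$\int_{\mathbb R}\chi_\varepsilon(x-\tilde x(t)-x_0)\tilde v_1(t,x)^2dx+\nu\int_0^t\int_{\mathbb{R}}\chi_\varepsilon'(x-\tilde x(s)-x_0)\{(\partial_x\tilde v_1)^2+\tilde v_1^2\}\,dx\,ds\le\int_{\mathbb R}\chi_\varepsilon(x-\tilde x(0)-x_0)v_0(x)^2dx$$ holds for all $x_0\in\mathbb R$, $t\ge0$, with $\nu=\frac12\min\{3,c_1\}$. Suppose $\varepsilon\in(0,\varepsilon_0)$, $\|v_0\|_{L^2}<\delta$, and $\tilde x$ is a $C^1$ function with $\inf_{t\ge0}\tilde x'(t)\ge c_1+\sigma$ for some $\sigma>0$. Then for $t\ge0$, $$\int_{\mathbb{R}}\chi_\varepsilon(x-\tilde x(t))\tilde v_1(t,x)^2\,dx\le\int_{\mathbb{R}}\chi_\varepsilon(x-\tilde x(0)-\sigma t)v_0(x)^2\,dx,$$ and the right-hand side tends to $0$ as $t\to\infty$.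
   Context: The equation is globally well-posed in $L^2$ for $p=2$ and $H^1$ for $p=3$. $\chi_\varepsilon(x)=1+\tanh(\varepsilon x)$. (The existence of constants $\varepsilon_0,\delta$ as in the hypothesis is guaranteed by a virial lemma proved in the paper.) *)

theory Defs
  imports "HOL-Analysis.Analysis"
begin

definition chi :: "real \<Rightarrow> real \<Rightarrow> real" where
  "chi \<epsilon> x = 1 + tanh (\<epsilon> * x)"

definition L2 :: "(real \<Rightarrow> real) \<Rightarrow> bool" where
  "L2 f \<longleftrightarrow> f \<in> borel_measurable lborel \<and> integrable lborel (\<lambda>x. (f x)\<^sup>2)"

definition L2_norm :: "(real \<Rightarrow> real) \<Rightarrow> real" where
  "L2_norm f = sqrt (\<integral>x. (f x)\<^sup>2 \<partial>lborel)"

text \<open>C-infinity functions of one variable: all iterated derivatives exist (everywhere).\<close>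
definition smooth1 :: "(real \<Rightarrow> real) \<Rightarrow> bool" where
  "smooth1 \<phi> \<longleftrightarrow> (\<exists>F. \<phi> \<in> F \<and>
      (\<forall>g\<in>F. \<exists>g'\<in>F. \<forall>x. (g has_real_derivative g' x) (at x)))"

definition test_fun1 :: "(real \<Rightarrow> real) \<Rightarrow> bool" where
  "test_fun1 \<phi> \<longleftrightarrow> smooth1 \<phi> \<and> (\<exists>b. \<forall>x. \<bar>x\<bar> > b \<longrightarrow> \<phi> x = 0)"

definition is_weak_deriv :: "(real \<Rightarrow> real) \<Rightarrow> (real \<Rightarrow> real) \<Rightarrow> bool" where
  "is_weak_deriv f g \<longleftrightarrow>
     (\<forall>\<phi>. test_fun1 \<phi> \<longrightarrow>
        integrable lborel (\<lambda>x. f x * deriv \<phi> x) \<and> integrable lborel (\<lambda>x. g x * \<phi> x) \<and>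
        (\<integral>x. f x * deriv \<phi> x \<partial>lborel) = - (\<integral>x. g x * \<phi> x \<partial>lborel))"

definition wderiv :: "(real \<Rightarrow> real) \<Rightarrow> real \<Rightarrow> real" where
  "wderiv f = (SOME g. is_weak_deriv f g)"

definition H1 :: "(real \<Rightarrow> real) \<Rightarrow> bool" where
  "H1 f \<longleftrightarrow> L2 f \<and> (\<exists>g. L2 g \<and> is_weak_deriv f g)"

definition admissible :: "nat \<Rightarrow> (real \<Rightarrow> real) \<Rightarrow> bool" where
  "admissible p v0 \<longleftrightarrow> (p = 2 \<and> L2 v0) \<or> (p = 3 \<and> H1 v0)"

text \<open>C-infinity functions of (t,x): jointly continuous, with all iterated partial
  derivatives existing and jointly continuous.\<close>
definition smooth2 :: "(real \<Rightarrow> real \<Rightarrow> real) \<Rightarrow> bool" where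
  "smooth2 \<phi> \<longleftrightarrow> (\<exists>F. \<phi> \<in> F \<and>
      (\<forall>g\<in>F. continuous_on UNIV (\<lambda>(t, x). g t x) \<and>
         (\<exists>gt\<in>F. \<exists>gx\<in>F. \<forall>t x.
            ((\<lambda>s. g s x) has_real_derivative gt t x) (at t) \<and>
            ((\<lambda>y. g t y) has_real_derivative gx t x) (at x))))"

definition Dt :: "(real \<Rightarrow> real \<Rightarrow> real) \<Rightarrow> real \<Rightarrow> real \<Rightarrow> real" where
  "Dt g t x = deriv (\<lambda>s. g s x) t"

definition Dx :: "(real \<Rightarrow> real \<Rightarrow> real) \<Rightarrow> real \<Rightarrow> real \<Rightarrow> real" where
  "Dx g t x = deriv (\<lambda>y. g t y) x"

definition test_fun2 :: "(real \<Rightarrow> real \<Rightarrow> real) \<Rightarrow> bool" where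
  "test_fun2 \<phi> \<longleftrightarrow> smooth2 \<phi> \<and>
     (\<exists>a T b. 0 < a \<and> (\<forall>t x. \<phi> t x \<noteq> 0 \<longrightarrow> a \<le> t \<and> t \<le> T \<and> \<bar>x\<bar> \<le> b))"

text \<open>u is a solution with initial datum v0: u(0) = v0, u(t) lies in the well-posedness
  space (L^2 for p = 2, H^1 for p = 3) for t >= 0, t \<mapsto> u(t) is continuous into L^2,
  and the equation holds in the sense of distributions on (0,\<infinity>) \<times> R.\<close>
definition gKdV_solution :: "nat \<Rightarrow> (real \<Rightarrow> real) \<Rightarrow> (real \<Rightarrow> real \<Rightarrow> real) \<Rightarrow> bool" where
  "gKdV_solution p v0 u \<longleftrightarrow>
     u 0 = v0 \<and>
     (\<forall>t\<ge>0. admissible p (u t)) \<and>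
     (\<lambda>(t, x). u t x) \<in> borel_measurable (lborel \<Otimes>\<^sub>M lborel) \<and>
     (\<forall>t0\<ge>0. ((\<lambda>t. \<integral>x. (u t x - u t0 x)\<^sup>2 \<partial>lborel) \<longlongrightarrow> 0) (at t0 within {0..})) \<and>
     (\<forall>\<phi>. test_fun2 \<phi> \<longrightarrow>
        (let w = (\<lambda>(t, x). u t x * (Dt \<phi> t x + Dx (Dx (Dx \<phi>)) t x)
                           + 3 * (u t x) ^ p * Dx \<phi> t x)
         in integrable (lborel \<Otimes>\<^sub>M lborel) w \<and> integral\<^sup>L (lborel \<Otimes>\<^sub>M lborel) w = 0))"

end

theory Submission
  imports Defs "HOL-Real_Asymp.Real_Asymp"
begin

text \<open>Along the shifted curve \<open>y(s) = x\<^sub>t(s) - \<sigma> s\<close>, whose speed is still at least \<open>c\<^sub>1\<close>,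
  the virial estimate with base point \<open>x\<^sub>0 = \<sigma> t\<close> gives the monotonicity bound. On the
  right-hand side the weight \<open>\<chi>\<^sub>\<epsilon>(x - x\<^sub>t(0) - \<sigma> t)\<close> tends to \<open>0\<close> pointwise as \<open>t \<rightarrow> \<infinity>\<close> and is
  bounded by \<open>2\<close>, so dominated convergence against \<open>2 v\<^sub>0\<^sup>2 \<in> L\<^sup>1\<close> gives the decay.\<close>

lemma chi_nonneg: "0 \<le> chi e x"
  unfolding chi_def using tanh_real_gt_neg1[of "e * x"] by simp

lemma chi_le_2: "chi e x \<le> 2"
  unfolding chi_def using tanh_real_bounds[of "e * x"] by simp

lemma continuous_on_chi: "continuous_on UNIV (chi e)"
  unfolding chi_def by (intro continuous_intros) (metis cosh_real_pos less_irrefl)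

lemma tendsto_chi_at_bot:
  assumes "filterlim f at_bot F" "e > 0"
  shows "((\<lambda>t. chi e (f t)) \<longlongrightarrow> 0) F"
proof -
  have "filterlim (\<lambda>t. e * f t) at_bot F"
    using assms by (auto intro: filterlim_tendsto_pos_mult_at_bot)
  then have "((\<lambda>t. tanh (e * f t)) \<longlongrightarrow> -1) F"
    by (rule filterlim_compose[OF tanh_real_at_bot])
  then show ?thesis
    unfolding chi_def by (auto intro: tendsto_eq_intros)
qed

lemma admissible_L2: "admissible p v \<Longrightarrow> L2 v"
  unfolding admissible_def H1_def by auto

lemma L2_weighted_integrable:
  assumes "L2 v" "w \<in> borel_measurable borel" "\<And>x. \<bar>w x\<bar> \<le> C"
  shows "integrable lborel (\<lambda>x. w x * (v x)\<^sup>2)"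
proof (rule Bochner_Integration.integrable_bound)
  show "integrable lborel (\<lambda>x. C * (v x)\<^sup>2)"
    using assms(1) unfolding L2_def by simp
  show "(\<lambda>x. w x * (v x)\<^sup>2) \<in> borel_measurable lborel"
    using assms(1,2) unfolding L2_def by (auto intro: borel_measurable_times borel_measurable_power)
  show "AE x in lborel. norm (w x * (v x)\<^sup>2) \<le> norm (C * (v x)\<^sup>2)"
    using assms(3) by (auto simp: abs_mult intro!: mult_right_mono order_trans[OF _ abs_ge_self])
qed

lemma L2_weighted_nn_integral_tendsto_zero:
  assumes v: "L2 v" and e: "e > 0" and \<sigma>: "\<sigma> > 0"
  shows "((\<lambda>t. \<integral>\<^sup>+x. ennreal (chi e (x - a - \<sigma> * t) * (v x)\<^sup>2) \<partial>lborel) \<longlongrightarrow> 0) at_top"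
proof -
  have meas: "(\<lambda>x. chi e (x - a - \<sigma> * t)) \<in> borel_measurable borel" for t
    by (intro borel_measurable_continuous_onI continuous_on_compose2[OF continuous_on_chi]
        continuous_intros) auto
  have int: "integrable lborel (\<lambda>x. chi e (x - a - \<sigma> * t) * (v x)\<^sup>2)" for t
    by (rule L2_weighted_integrable[OF v meas, of _ 2]) (simp add: chi_nonneg chi_le_2)
  have "((\<lambda>t. \<integral>x. chi e (x - a - \<sigma> * t) * (v x)\<^sup>2 \<partial>lborel) \<longlongrightarrow> \<integral>x. 0 \<partial>(lborel :: real measure)) at_top"
  proof (rule integral_dominated_convergence_at_top[of "\<lambda>x. 0" lborel
      "\<lambda>t x. chi e (x - a - \<sigma> * t) * (v x)\<^sup>2" "\<lambda>x. 2 * (v x)\<^sup>2"])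
    show "(\<lambda>x. chi e (x - a - \<sigma> * t) * (v x)\<^sup>2) \<in> borel_measurable lborel" for t
      using int by blast
    show "integrable lborel (\<lambda>x. 2 * (v x)\<^sup>2)"
      using v unfolding L2_def by simp
    show "\<forall>\<^sub>F t in at_top. AE x in lborel.
        norm (chi e (x - a - \<sigma> * t) * (v x)\<^sup>2) \<le> 2 * (v x)\<^sup>2"
      by (intro always_eventually allI AE_I2) (simp add: abs_mult chi_nonneg chi_le_2 mult_right_mono)
    show "AE x in lborel. ((\<lambda>t. chi e (x - a - \<sigma> * t) * (v x)\<^sup>2) \<longlongrightarrow> 0) at_top"
    proof (rule AE_I2)
      fix x :: real
      have "filterlim (\<lambda>t. x - a - \<sigma> * t) at_bot at_top"
        using \<sigma> by real_asymp
      then show "((\<lambda>t. chi e (x - a - \<sigma> * t) * (v x)\<^sup>2) \<longlongrightarrow> 0) at_top"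
        by (intro tendsto_mult_left_zero tendsto_chi_at_bot e)
    qed
  qed simp
  then have "((\<lambda>t. ennreal (\<integral>x. chi e (x - a - \<sigma> * t) * (v x)\<^sup>2 \<partial>lborel)) \<longlongrightarrow> ennreal 0) at_top"
    by (intro tendsto_ennrealI) simp
  moreover have "(\<integral>\<^sup>+x. ennreal (chi e (x - a - \<sigma> * t) * (v x)\<^sup>2) \<partial>lborel)
      = ennreal (\<integral>x. chi e (x - a - \<sigma> * t) * (v x)\<^sup>2 \<partial>lborel)" for t
    by (rule nn_integral_eq_integral[OF int]) (simp add: chi_nonneg)
  ultimately show ?thesis
    by simp
qed

theorem corollary6p4:
  fixes p :: nat
    and S :: "(real \<Rightarrow> real) \<Rightarrow> real \<Rightarrow> real \<Rightarrow> real"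
    and c1 \<epsilon>0 \<delta> \<epsilon> \<sigma> :: real
    and v0 xt xt' :: "real \<Rightarrow> real"
  assumes p: "p \<in> {2, 3}"
    and sol: "\<And>w0. admissible p w0 \<Longrightarrow> gKdV_solution p w0 (S w0)"
    and c1: "c1 > 0" and eps0: "\<epsilon>0 > 0" and delta: "\<delta> > 0"
    and virial: "\<And>y y' e w0 x0 t.
       (\<forall>s\<ge>0. (y has_real_derivative y' s) (at s within {0..})) \<Longrightarrow>
       continuous_on {0..} y' \<Longrightarrow> (\<forall>s\<ge>0. y' s \<ge> c1) \<Longrightarrow>
       0 < e \<Longrightarrow> e < \<epsilon>0 \<Longrightarrow>
       admissible p w0 \<Longrightarrow> L2_norm w0 < \<delta> \<Longrightarrow> t \<ge> 0 \<Longrightarrow>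
       (\<integral>\<^sup>+x. ennreal (chi e (x - y t - x0) * (S w0 t x)\<^sup>2) \<partial>lborel)
       + ennreal ((1/2) * min 3 c1) *
         (\<integral>\<^sup>+s\<in>{0..t}. (\<integral>\<^sup>+x. ennreal (deriv (chi e) (x - y s - x0) *
              ((wderiv (S w0 s) x)\<^sup>2 + (S w0 s x)\<^sup>2)) \<partial>lborel) \<partial>lborel)
       \<le> (\<integral>\<^sup>+x. ennreal (chi e (x - y 0 - x0) * (w0 x)\<^sup>2) \<partial>lborel)"
    and eps: "0 < \<epsilon>" "\<epsilon> < \<epsilon>0"
    and v0: "admissible p v0" "L2_norm v0 < \<delta>"
    and sigma: "\<sigma> > 0"
    and xt: "\<forall>s\<ge>0. (xt has_real_derivative xt' s) (at s within {0..})"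
      "continuous_on {0..} xt'" "\<forall>s\<ge>0. xt' s \<ge> c1 + \<sigma>"
  shows "(\<forall>t\<ge>0. (\<integral>\<^sup>+x. ennreal (chi \<epsilon> (x - xt t) * (S v0 t x)\<^sup>2) \<partial>lborel)
                 \<le> (\<integral>\<^sup>+x. ennreal (chi \<epsilon> (x - xt 0 - \<sigma> * t) * (v0 x)\<^sup>2) \<partial>lborel))
         \<and> ((\<lambda>t. \<integral>\<^sup>+x. ennreal (chi \<epsilon> (x - xt 0 - \<sigma> * t) * (v0 x)\<^sup>2) \<partial>lborel)
               \<longlongrightarrow> 0) at_top"
proof (intro conjI allI impI)
  fix t :: real
  assume t: "t \<ge> 0"
  have "\<forall>s\<ge>0. ((\<lambda>s. xt s - \<sigma> * s) has_real_derivative xt' s - \<sigma>) (at s within {0..})"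
    using xt(1) by (auto intro!: derivative_eq_intros)
  moreover have "continuous_on {0..} (\<lambda>s. xt' s - \<sigma>)"
    using xt(2) by (intro continuous_intros)
  moreover have "\<forall>s\<ge>0. xt' s - \<sigma> \<ge> c1"
    using xt(3) by auto
  ultimately have "(\<integral>\<^sup>+x. ennreal (chi \<epsilon> (x - (xt t - \<sigma> * t) - \<sigma> * t) * (S v0 t x)\<^sup>2) \<partial>lborel)
      \<le> (\<integral>\<^sup>+x. ennreal (chi \<epsilon> (x - (xt 0 - \<sigma> * 0) - \<sigma> * t) * (v0 x)\<^sup>2) \<partial>lborel)"
    by (rule order_trans[rotated, OF virial[OF _ _ _ eps v0 t]]) simp
  then show "(\<integral>\<^sup>+x. ennreal (chi \<epsilon> (x - xt t) * (S v0 t x)\<^sup>2) \<partial>lborel)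
      \<le> (\<integral>\<^sup>+x. ennreal (chi \<epsilon> (x - xt 0 - \<sigma> * t) * (v0 x)\<^sup>2) \<partial>lborel)"
    by simp
next
  show "((\<lambda>t. \<integral>\<^sup>+x. ennreal (chi \<epsilon> (x - xt 0 - \<sigma> * t) * (v0 x)\<^sup>2) \<partial>lborel) \<longlongrightarrow> 0) at_top"
    using L2_weighted_nn_integral_tendsto_zero[OF admissible_L2[OF v0(1)] eps(1) sigma] .
qed

end
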